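(* Let $A$ be a sesquiad and $\mathfrak a\subset A$ a subset. Then there is an ideal $I$ of the ring $R_A$ with $\mathfrak a=I\cap A$ (with $A$ identified with its image in $R_A$) if and only if (i) $\mathfrak a$ is closed under addition, i.e. whenever $s\in\mathfrak a^n$, $k\in\mathbb Z^n$ and $\sum_jk_js_j$ is defined in $A$, it lies in $\mathfrak a$; and (ii) $\mathfrak a A\subset\mathfrak a$.
   Context: All rings are commutative with $1$. A monoid is a commutative multiplicative monoid with $1$ and a zero $0$. A sesquiad is a monoid $A$ with partially defined integer linear combinations $\sum_jk_ja_j$ ($k\in\mathbb Z^n$, $n\ge2$), defined exactly when, for some injective monoid morphism $\varphi:A\to R$ into a ring with $\varphi(0)=0$, $\sum_jk_j\varphi(a_j)\in\varphi(A)$, and then equal to the preimage of that element. The universal ring $R_A=\mathbb ZA/I(A)$, where $I(A)$ is generated by all $\sum_jk_ja_j-(\text{their value in }A)$ for defined sums; $A$ injects into $R_A$. *)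

theory Defs
  imports "HOL-Algebra.QuotRing"
begin

text \<open>Raw sesquiad data: a carrier set, the monoid operations (multiplication,
unit 1, zero 0) and the partial integer linear combinations.
s_sum S n k a is the value of the sum over j<n of k_j a_j if defined, None otherwise.\<close>

record 'a sesquiad =
  s_carrier :: "'a set"
  s_mult :: "'a \<Rightarrow> 'a \<Rightarrow> 'a"
  s_one :: 'a
  s_zero :: 'a
  s_sum :: "nat \<Rightarrow> (nat \<Rightarrow> int) \<Rightarrow> (nat \<Rightarrow> 'a) \<Rightarrow> 'a option"

definition comm_monoid_zero :: "'a sesquiad \<Rightarrow> bool" where
  "comm_monoid_zero S \<longleftrightarrow>
     s_one S \<in> s_carrier S \<and> s_zero S \<in> s_carrier S \<and>
     (\<forall>x\<in>s_carrier S. \<forall>y\<in>s_carrier S. s_mult S x y \<in> s_carrier S) \<and>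
     (\<forall>x\<in>s_carrier S. \<forall>y\<in>s_carrier S. \<forall>z\<in>s_carrier S.
        s_mult S (s_mult S x y) z = s_mult S x (s_mult S y z)) \<and>
     (\<forall>x\<in>s_carrier S. \<forall>y\<in>s_carrier S. s_mult S x y = s_mult S y x) \<and>
     (\<forall>x\<in>s_carrier S. s_mult S (s_one S) x = x) \<and>
     (\<forall>x\<in>s_carrier S. s_mult S (s_zero S) x = s_zero S)"

text \<open>S is a sesquiad, witnessed by the injective monoid morphism phi into the
commutative ring 'r with phi(0)=0: for n \<ge> 2 the sum of k_j a_j is defined iff the sum of
k_j phi(a_j) lies in phi(A), and then its value is the preimage.\<close>
definition sesquiad_via :: "'a sesquiad \<Rightarrow> ('a \<Rightarrow> 'r::comm_ring_1) \<Rightarrow> bool" where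
  "sesquiad_via S \<phi> \<longleftrightarrow>
     comm_monoid_zero S \<and>
     inj_on \<phi> (s_carrier S) \<and>
     \<phi> (s_one S) = 1 \<and> \<phi> (s_zero S) = 0 \<and>
     (\<forall>x\<in>s_carrier S. \<forall>y\<in>s_carrier S. \<phi> (s_mult S x y) = \<phi> x * \<phi> y) \<and>
     (\<forall>n k a. 2 \<le> n \<longrightarrow> (\<forall>j<n. a j \<in> s_carrier S) \<longrightarrow>
        (case s_sum S n k a of
           None \<Rightarrow> (\<Sum>j<n. of_int (k j) * \<phi> (a j)) \<notin> \<phi> ` s_carrier S
         | Some b \<Rightarrow> b \<in> s_carrier S \<and> \<phi> b = (\<Sum>j<n. of_int (k j) * \<phi> (a j))))"

definition monoid_ring :: "'a sesquiad \<Rightarrow> ('a \<Rightarrow> int) ring" where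
  "monoid_ring S = \<lparr>
     carrier = {f. finite {x. f x \<noteq> 0} \<and> (\<forall>x. x \<notin> s_carrier S \<longrightarrow> f x = 0)},
     mult = (\<lambda>f g c. \<Sum>p\<in>{(x, y). f x \<noteq> 0 \<and> g y \<noteq> 0 \<and> s_mult S x y = c}.
                         f (fst p) * g (snd p)),
     one = (\<lambda>x. if x = s_one S then 1 else 0),
     zero = (\<lambda>x. 0),
     add = (\<lambda>f g x. f x + g x) \<rparr>"

definition basis_elt :: "'a \<Rightarrow> 'a \<Rightarrow> int" where
  "basis_elt a = (\<lambda>x. if x = a then 1 else 0)"

definition sum_relations :: "'a sesquiad \<Rightarrow> ('a \<Rightarrow> int) set" where
  "sum_relations S = {(\<lambda>x. (\<Sum>j<n. if a j = x then k j else 0) - basis_elt b x) | n k a b.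
      2 \<le> n \<and> (\<forall>j<n. a j \<in> s_carrier S) \<and> s_sum S n k a = Some b}"

definition rel_ideal :: "'a sesquiad \<Rightarrow> ('a \<Rightarrow> int) set" where
  "rel_ideal S = genideal (monoid_ring S) (sum_relations S)"

definition universal_ring :: "'a sesquiad \<Rightarrow> ('a \<Rightarrow> int) set ring" where
  "universal_ring S = monoid_ring S Quot rel_ideal S"

definition univ_map :: "'a sesquiad \<Rightarrow> 'a \<Rightarrow> ('a \<Rightarrow> int) set" where
  "univ_map S a = a_r_coset (monoid_ring S) (rel_ideal S) (basis_elt a)"

definition closed_under_sums :: "'a sesquiad \<Rightarrow> 'a set \<Rightarrow> bool" where
  "closed_under_sums S \<aa> \<longleftrightarrow>
     (\<forall>n k s b. 2 \<le> n \<longrightarrow> (\<forall>j<n. s j \<in> \<aa>) \<longrightarrow> s_sum S n k s = Some b \<longrightarrow> b \<in> \<aa>)"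

end

theory Submission
  imports Defs
begin

(* By the correspondence theorem for quotient rings, the subsets of A of the
   form {a. [a] in I} for an ideal I of R_A are exactly the traces
   {a. [a] in J} of ideals J of ZA containing I(A). For such a J, the trace is closed under
   multiplication by A because [x][y] = [xy], and closed under the defined sums because
   sum k_j [s_j] - [b] is a generator of I(A). Conversely, if a subset satisfies (i) and (ii),
   let J be the sum of I(A) and the ideal of elements of ZA supported on it. If [a] lies in J,
   then evaluating along the embedding phi : A -> R, which kills I(A), expresses phi(a) as an
   integer combination of images of elements of the subset; hence that sum is defined in A,
   its value is a by injectivity of phi, and a lies in the subset by (i). *)

section \<open>The monoid ring ZA\<close>

definition supp :: "('a \<Rightarrow> int) \<Rightarrow> 'a set" where
  "supp f = {x. f x \<noteq> 0}"

lemma ZA_carrier: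
  "f \<in> carrier (monoid_ring S) \<longleftrightarrow> finite (supp f) \<and> (\<forall>x. x \<notin> s_carrier S \<longrightarrow> f x = 0)"
  by (simp add: monoid_ring_def supp_def)

lemma ZA_add [simp]: "f \<oplus>\<^bsub>monoid_ring S\<^esub> g = (\<lambda>x. f x + g x)"
  and ZA_zero [simp]: "\<zero>\<^bsub>monoid_ring S\<^esub> = (\<lambda>x. 0)"
  and ZA_one: "\<one>\<^bsub>monoid_ring S\<^esub> = (\<lambda>x. if x = s_one S then 1 else 0)"
  by (simp_all add: monoid_ring_def)

lemma finite_supp: "f \<in> carrier (monoid_ring S) \<Longrightarrow> finite (supp f)"
  and supp_subset: "f \<in> carrier (monoid_ring S) \<Longrightarrow> supp f \<subseteq> s_carrier S"
  by (auto simp: ZA_carrier supp_def)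

lemma ZA_mult_expand:
  assumes "finite F" "supp f \<subseteq> F" "finite G" "supp g \<subseteq> G"
  shows "(f \<otimes>\<^bsub>monoid_ring S\<^esub> g) c
    = (\<Sum>x\<in>F. \<Sum>y\<in>G. if s_mult S x y = c then f x * g y else 0)"
proof -
  let ?P = "{(x, y). f x \<noteq> 0 \<and> g y \<noteq> 0 \<and> s_mult S x y = c}"
  have "(f \<otimes>\<^bsub>monoid_ring S\<^esub> g) c = (\<Sum>p\<in>?P. f (fst p) * g (snd p))"
    by (simp add: monoid_ring_def)
  also have "\<dots> = (\<Sum>p\<in>F \<times> G. if s_mult S (fst p) (snd p) = c then f (fst p) * g (snd p) else 0)"
    using assms by (intro sum.mono_neutral_cong_left) (auto simp: supp_def)
  also have "\<dots> = (\<Sum>x\<in>F. \<Sum>y\<in>G. if s_mult S x y = c then f x * g y else 0)"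
    by (simp add: sum.cartesian_product split_def)
  finally show ?thesis .
qed

lemma ZA_mult_supp:
  assumes "finite (supp f)" "finite (supp g)"
  shows "supp (f \<otimes>\<^bsub>monoid_ring S\<^esub> g) \<subseteq> (\<lambda>(x, y). s_mult S x y) ` (supp f \<times> supp g)"
proof
  fix c assume "c \<in> supp (f \<otimes>\<^bsub>monoid_ring S\<^esub> g)"
  hence "(\<Sum>x\<in>supp f. \<Sum>y\<in>supp g. if s_mult S x y = c then f x * g y else 0) \<noteq> 0"
    using ZA_mult_expand[of "supp f" f "supp g" g S c] assms by (simp add: supp_def)
  then obtain x y where "x \<in> supp f" "y \<in> supp g" "s_mult S x y = c"
    by (auto elim!: sum.not_neutral_contains_not_neutral split: if_splits)
  thus "c \<in> (\<lambda>(x, y). s_mult S x y) ` (supp f \<times> supp g)" by auto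
qed

lemma sum_rotate3:
  "(\<Sum>v\<in>V. \<Sum>y\<in>G. \<Sum>z\<in>H. T v y z) = (\<Sum>y\<in>G. \<Sum>z\<in>H. \<Sum>v\<in>V. (T v y z :: 'b::comm_monoid_add))"
  by (subst sum.swap) (simp add: sum.swap[of _ V])

lemma ZA_monomial_mult:
  "(\<lambda>x. if x = a then p else 0) \<otimes>\<^bsub>monoid_ring S\<^esub> (\<lambda>x. if x = b then q else 0)
    = (\<lambda>x. if x = s_mult S a b then p * q else 0)"
proof
  fix c
  have "((\<lambda>x. if x = a then p else 0) \<otimes>\<^bsub>monoid_ring S\<^esub> (\<lambda>x. if x = b then q else 0)) c
    = (\<Sum>x\<in>{a}. \<Sum>y\<in>{b}. if s_mult S x y = c then (if x = a then p else 0) * (if y = b then q else 0) else 0)"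
    by (rule ZA_mult_expand) (auto simp: supp_def)
  thus "((\<lambda>x. if x = a then p else 0) \<otimes>\<^bsub>monoid_ring S\<^esub> (\<lambda>x. if x = b then q else 0)) c
      = (if c = s_mult S a b then p * q else 0)"
    by auto
qed

lemma basis_elt_mult: "basis_elt a \<otimes>\<^bsub>monoid_ring S\<^esub> basis_elt b = basis_elt (s_mult S a b)"
  using ZA_monomial_mult[of S a 1 b 1] by (simp add: basis_elt_def cong: if_cong)

section \<open>Formal sums and evaluation\<close>

definition formal_sum :: "nat \<Rightarrow> (nat \<Rightarrow> int) \<Rightarrow> (nat \<Rightarrow> 'a) \<Rightarrow> 'a \<Rightarrow> int" where
  "formal_sum n k a = (\<lambda>x. \<Sum>j<n. if a j = x then k j else 0)"

lemma formal_sum_0: "formal_sum 0 k a = (\<lambda>x. 0)"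
  and formal_sum_Suc: "formal_sum (Suc n) k a = (\<lambda>x. formal_sum n k a x + (if x = a n then k n else 0))"
  by (auto simp: formal_sum_def)

lemma supp_formal_sum: "supp (formal_sum n k a) \<subseteq> a ` {..<n}"
  by (auto simp: supp_def formal_sum_def elim!: sum.not_neutral_contains_not_neutral split: if_splits)

text \<open>Evaluation of elements of ZA along a map w from A into a commutative ring: the
  additive extension of w. For the sesquiad embedding it is a ring map killing I(A).\<close>

definition evaluate :: "('a \<Rightarrow> 'r::comm_ring_1) \<Rightarrow> ('a \<Rightarrow> int) \<Rightarrow> 'r" where
  "evaluate w f = (\<Sum>x\<in>supp f. of_int (f x) * w x)"

lemma evaluate_eq: "finite F \<Longrightarrow> supp f \<subseteq> F \<Longrightarrow> evaluate w f = (\<Sum>x\<in>F. of_int (f x) * w x)"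
  unfolding evaluate_def by (rule sum.mono_neutral_left) (auto simp: supp_def)

lemma evaluate_add:
  assumes "finite (supp f)" "finite (supp g)"
  shows "evaluate w (\<lambda>x. f x + g x) = evaluate w f + evaluate w g"
proof -
  let ?F = "supp f \<union> supp g"
  have fin: "finite ?F" using assms by simp
  have "evaluate w (\<lambda>x. f x + g x) = (\<Sum>x\<in>?F. of_int (f x + g x) * w x)"
    by (rule evaluate_eq[OF fin]) (auto simp: supp_def)
  also have "\<dots> = (\<Sum>x\<in>?F. of_int (f x) * w x) + (\<Sum>x\<in>?F. of_int (g x) * w x)"
    by (simp add: sum.distrib[symmetric] distrib_right)
  also have "\<dots> = evaluate w f + evaluate w g"
    using evaluate_eq[OF fin, of f w] evaluate_eq[OF fin, of g w] by auto
  finally show ?thesis .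
qed

lemma evaluate_monomial: "evaluate w (\<lambda>x. if x = a then p else 0) = of_int p * w a"
  by (subst evaluate_eq[of "{a}"]) (auto simp: supp_def)

lemma evaluate_formal_sum: "evaluate w (formal_sum n k a) = (\<Sum>j<n. of_int (k j) * w (a j))"
proof (induction n)
  case 0
  show ?case by (simp add: formal_sum_0 evaluate_def supp_def)
next
  case (Suc n)
  have "finite (supp (formal_sum n k a))" by (rule finite_subset[OF supp_formal_sum]) simp
  moreover have "finite (supp (\<lambda>x. if x = a n then k n else 0))"
    by (rule finite_subset[of _ "{a n}"]) (auto simp: supp_def)
  ultimately show ?case
    by (simp add: formal_sum_Suc evaluate_add evaluate_monomial Suc.IH)
qed

lemma evaluate_mult:
  assumes f: "f \<in> carrier (monoid_ring S)" and g: "g \<in> carrier (monoid_ring S)"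
    and w_mult: "\<And>x y. x \<in> s_carrier S \<Longrightarrow> y \<in> s_carrier S \<Longrightarrow> w (s_mult S x y) = w x * w y"
  shows "evaluate w (f \<otimes>\<^bsub>monoid_ring S\<^esub> g) = evaluate w f * evaluate w g"
proof -
  let ?U = "(\<lambda>(x, y). s_mult S x y) ` (supp f \<times> supp g)"
  let ?T = "\<lambda>c x y. if s_mult S x y = c then of_int (f x * g y) * w c else 0"
  have fin_U: "finite ?U" using finite_supp[OF f] finite_supp[OF g] by simp
  have "evaluate w (f \<otimes>\<^bsub>monoid_ring S\<^esub> g) = (\<Sum>c\<in>?U. of_int ((f \<otimes>\<^bsub>monoid_ring S\<^esub> g) c) * w c)"
    by (rule evaluate_eq[OF fin_U ZA_mult_supp[OF finite_supp[OF f] finite_supp[OF g]]])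
  also have "\<dots> = (\<Sum>c\<in>?U. \<Sum>x\<in>supp f. \<Sum>y\<in>supp g. ?T c x y)"
    using ZA_mult_expand[OF finite_supp[OF f] subset_refl finite_supp[OF g] subset_refl]
    by (simp add: of_int_sum sum_distrib_right) (intro sum.cong refl; simp)
  also have "\<dots> = (\<Sum>x\<in>supp f. \<Sum>y\<in>supp g. \<Sum>c\<in>?U. ?T c x y)"
    by (rule sum_rotate3)
  also have "\<dots> = (\<Sum>x\<in>supp f. \<Sum>y\<in>supp g. (of_int (f x) * w x) * (of_int (g y) * w y))"
  proof (intro sum.cong refl)
    fix x y assume x: "x \<in> supp f" and y: "y \<in> supp g"
    hence "s_mult S x y \<in> ?U" by auto
    hence "(\<Sum>c\<in>?U. ?T c x y) = of_int (f x * g y) * w (s_mult S x y)"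
      using fin_U by (simp add: sum.delta)
    also have "\<dots> = (of_int (f x) * w x) * (of_int (g y) * w y)"
      using x y supp_subset[OF f] supp_subset[OF g] by (simp add: w_mult subsetD ac_simps)
    finally show "(\<Sum>c\<in>?U. ?T c x y) = (of_int (f x) * w x) * (of_int (g y) * w y)" .
  qed
  also have "\<dots> = evaluate w f * evaluate w g"
    by (simp add: evaluate_def sum_product)
  finally show ?thesis .
qed

section \<open>Traces of ideals and ideals spanned by subsets\<close>

text \<open>The theorem identifies the traces of ideals containing I(A).\<close>

definition ideal_trace :: "'a sesquiad \<Rightarrow> ('a \<Rightarrow> int) set \<Rightarrow> 'a set" where
  "ideal_trace S J = {a \<in> s_carrier S. basis_elt a \<in> J}"

definition supported_on :: "'a sesquiad \<Rightarrow> 'a set \<Rightarrow> ('a \<Rightarrow> int) set" where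
  "supported_on S \<aa> = {f \<in> carrier (monoid_ring S). \<forall>x. x \<notin> \<aa> \<longrightarrow> f x = 0}"

text \<open>From now on the underlying data form a commutative monoid with zero; this is
  exactly what is needed for ZA to be a commutative ring.\<close>

context
  fixes S :: "'a sesquiad"
  assumes monoid: "comm_monoid_zero S"
begin

abbreviation (input) ZA :: "('a \<Rightarrow> int) ring" where "ZA \<equiv> monoid_ring S"
abbreviation (input) m :: "'a \<Rightarrow> 'a \<Rightarrow> 'a" where "m \<equiv> s_mult S"

lemma m_closed: "x \<in> s_carrier S \<Longrightarrow> y \<in> s_carrier S \<Longrightarrow> m x y \<in> s_carrier S"
  and m_assoc: "x \<in> s_carrier S \<Longrightarrow> y \<in> s_carrier S \<Longrightarrow> z \<in> s_carrier S \<Longrightarrow> m (m x y) z = m x (m y z)"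
  and m_comm: "x \<in> s_carrier S \<Longrightarrow> y \<in> s_carrier S \<Longrightarrow> m x y = m y x"
  and m_one: "x \<in> s_carrier S \<Longrightarrow> m (s_one S) x = x"
  and one_in_carrier: "s_one S \<in> s_carrier S"
  using monoid unfolding comm_monoid_zero_def by blast+

lemma ZA_mult_closed:
  assumes f: "f \<in> carrier ZA" and g: "g \<in> carrier ZA"
  shows "f \<otimes>\<^bsub>ZA\<^esub> g \<in> carrier ZA"
proof -
  let ?P = "(\<lambda>(x, y). m x y) ` (supp f \<times> supp g)"
  have sub: "supp (f \<otimes>\<^bsub>ZA\<^esub> g) \<subseteq> ?P"
    by (rule ZA_mult_supp[OF finite_supp[OF f] finite_supp[OF g]])
  moreover have "finite ?P"
    using finite_supp[OF f] finite_supp[OF g] by simp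
  moreover have "?P \<subseteq> s_carrier S"
    using supp_subset[OF f] supp_subset[OF g] by (auto intro: m_closed)
  ultimately have "finite (supp (f \<otimes>\<^bsub>ZA\<^esub> g))" "supp (f \<otimes>\<^bsub>ZA\<^esub> g) \<subseteq> s_carrier S"
    by (auto intro: finite_subset)
  thus ?thesis unfolding ZA_carrier supp_def by blast
qed

lemma ZA_mult_mult_expand:
  assumes f: "f \<in> carrier ZA" and g: "g \<in> carrier ZA" and h: "h \<in> carrier ZA"
  shows "((f \<otimes>\<^bsub>ZA\<^esub> g) \<otimes>\<^bsub>ZA\<^esub> h) d
    = (\<Sum>x\<in>supp f. \<Sum>y\<in>supp g. \<Sum>z\<in>supp h. if m (m x y) z = d then f x * g y * h z else 0)"
proof -
  let ?U = "(\<lambda>(x, y). m x y) ` (supp f \<times> supp g)"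
  let ?T = "\<lambda>u x y z. if m x y = u \<and> m u z = d then f x * g y * h z else 0"
  have fin_U: "finite ?U" using finite_supp[OF f] finite_supp[OF g] by simp
  have "((f \<otimes>\<^bsub>ZA\<^esub> g) \<otimes>\<^bsub>ZA\<^esub> h) d
      = (\<Sum>u\<in>?U. \<Sum>z\<in>supp h. if m u z = d then (f \<otimes>\<^bsub>ZA\<^esub> g) u * h z else 0)"
    using ZA_mult_supp[OF finite_supp[OF f] finite_supp[OF g]] finite_supp[OF h]
    by (intro ZA_mult_expand fin_U) auto
  also have "\<dots> = (\<Sum>u\<in>?U. \<Sum>z\<in>supp h. \<Sum>x\<in>supp f. \<Sum>y\<in>supp g. ?T u x y z)"
  proof (intro sum.cong refl)
    fix u z
    show "(if m u z = d then (f \<otimes>\<^bsub>ZA\<^esub> g) u * h z else 0)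
        = (\<Sum>x\<in>supp f. \<Sum>y\<in>supp g. ?T u x y z)"
      using ZA_mult_expand[OF finite_supp[OF f] subset_refl finite_supp[OF g] subset_refl]
      by (auto simp: sum_distrib_right intro!: sum.cong)
  qed
  also have "\<dots> = (\<Sum>u\<in>?U. \<Sum>x\<in>supp f. \<Sum>y\<in>supp g. \<Sum>z\<in>supp h. ?T u x y z)"
    by (intro sum.cong refl sum_rotate3)
  also have "\<dots> = (\<Sum>x\<in>supp f. \<Sum>y\<in>supp g. \<Sum>u\<in>?U. \<Sum>z\<in>supp h. ?T u x y z)"
    by (rule sum_rotate3)
  also have "\<dots> = (\<Sum>x\<in>supp f. \<Sum>y\<in>supp g. \<Sum>z\<in>supp h. \<Sum>u\<in>?U. ?T u x y z)"
    by (intro sum.cong refl sum.swap)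
  also have "\<dots> = (\<Sum>x\<in>supp f. \<Sum>y\<in>supp g. \<Sum>z\<in>supp h. if m (m x y) z = d then f x * g y * h z else 0)"
  proof (intro sum.cong refl)
    fix x y z assume "x \<in> supp f" "y \<in> supp g"
    hence "m x y \<in> ?U" by auto
    moreover have "(\<Sum>u\<in>?U. ?T u x y z)
        = (\<Sum>u\<in>?U. if u = m x y then (if m (m x y) z = d then f x * g y * h z else 0) else 0)"
      by (intro sum.cong) auto
    ultimately show "(\<Sum>u\<in>?U. ?T u x y z) = (if m (m x y) z = d then f x * g y * h z else 0)"
      using fin_U by simp
  qed
  finally show ?thesis .
qed

lemma ZA_mult_comm:
  assumes f: "f \<in> carrier ZA" and g: "g \<in> carrier ZA"
  shows "f \<otimes>\<^bsub>ZA\<^esub> g = g \<otimes>\<^bsub>ZA\<^esub> f"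
proof
  fix c
  have "(f \<otimes>\<^bsub>ZA\<^esub> g) c = (\<Sum>x\<in>supp f. \<Sum>y\<in>supp g. if m x y = c then f x * g y else 0)"
    by (rule ZA_mult_expand[OF finite_supp[OF f] subset_refl finite_supp[OF g] subset_refl])
  also have "\<dots> = (\<Sum>y\<in>supp g. \<Sum>x\<in>supp f. if m y x = c then g y * f x else 0)"
  proof (subst sum.swap, intro sum.cong refl)
    fix x y assume "x \<in> supp f" "y \<in> supp g"
    hence "m x y = m y x" using supp_subset[OF f] supp_subset[OF g] m_comm by blast
    thus "(if m x y = c then f x * g y else 0) = (if m y x = c then g y * f x else 0)" by simp
  qed
  also have "\<dots> = (g \<otimes>\<^bsub>ZA\<^esub> f) c"
    by (rule ZA_mult_expand[OF finite_supp[OF g] subset_refl finite_supp[OF f] subset_refl, symmetric])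
  finally show "(f \<otimes>\<^bsub>ZA\<^esub> g) c = (g \<otimes>\<^bsub>ZA\<^esub> f) c" .
qed

text \<open>Associativity follows from the triple-product formula and commutativity:
  the right-bracketed product is a left-bracketed product with rotated factors.\<close>

lemma ZA_mult_assoc:
  assumes f: "f \<in> carrier ZA" and g: "g \<in> carrier ZA" and h: "h \<in> carrier ZA"
  shows "(f \<otimes>\<^bsub>ZA\<^esub> g) \<otimes>\<^bsub>ZA\<^esub> h = f \<otimes>\<^bsub>ZA\<^esub> (g \<otimes>\<^bsub>ZA\<^esub> h)"
proof
  fix d
  have "(f \<otimes>\<^bsub>ZA\<^esub> (g \<otimes>\<^bsub>ZA\<^esub> h)) d = ((g \<otimes>\<^bsub>ZA\<^esub> h) \<otimes>\<^bsub>ZA\<^esub> f) d"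
    using ZA_mult_comm[OF f ZA_mult_closed[OF g h]] by simp
  also have "\<dots> = (\<Sum>y\<in>supp g. \<Sum>z\<in>supp h. \<Sum>x\<in>supp f.
      if m (m y z) x = d then g y * h z * f x else 0)"
    by (rule ZA_mult_mult_expand[OF g h f])
  also have "\<dots> = (\<Sum>x\<in>supp f. \<Sum>y\<in>supp g. \<Sum>z\<in>supp h.
      if m (m x y) z = d then f x * g y * h z else 0)"
  proof (subst sum_rotate3[where V = "supp f", symmetric], intro sum.cong refl)
    fix x y z assume "x \<in> supp f" "y \<in> supp g" "z \<in> supp h"
    hence "m (m y z) x = m (m x y) z"
      using supp_subset[OF f] supp_subset[OF g] supp_subset[OF h]
      by (metis m_assoc m_comm subsetD)
    thus "(if m (m y z) x = d then g y * h z * f x else 0)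
        = (if m (m x y) z = d then f x * g y * h z else 0)" by simp
  qed
  also have "\<dots> = ((f \<otimes>\<^bsub>ZA\<^esub> g) \<otimes>\<^bsub>ZA\<^esub> h) d"
    by (rule ZA_mult_mult_expand[OF f g h, symmetric])
  finally show "((f \<otimes>\<^bsub>ZA\<^esub> g) \<otimes>\<^bsub>ZA\<^esub> h) d = (f \<otimes>\<^bsub>ZA\<^esub> (g \<otimes>\<^bsub>ZA\<^esub> h)) d" ..
qed

lemma ZA_one_closed: "\<one>\<^bsub>ZA\<^esub> \<in> carrier ZA"
proof -
  have "supp \<one>\<^bsub>ZA\<^esub> \<subseteq> {s_one S}" by (auto simp: ZA_one supp_def)
  thus ?thesis using one_in_carrier by (auto simp: ZA_carrier ZA_one intro: finite_subset)
qed

lemma ZA_one_mult: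
  assumes f: "f \<in> carrier ZA"
  shows "\<one>\<^bsub>ZA\<^esub> \<otimes>\<^bsub>ZA\<^esub> f = f"
proof
  fix c
  have "(\<one>\<^bsub>ZA\<^esub> \<otimes>\<^bsub>ZA\<^esub> f) c
      = (\<Sum>x\<in>{s_one S}. \<Sum>y\<in>supp f. if m x y = c then \<one>\<^bsub>ZA\<^esub> x * f y else 0)"
    by (rule ZA_mult_expand[OF _ _ finite_supp[OF f] subset_refl]) (auto simp: ZA_one supp_def)
  also have "\<dots> = (\<Sum>y\<in>supp f. if y = c then f y else 0)"
    using supp_subset[OF f] by (auto simp: ZA_one m_one intro!: sum.cong)
  also have "\<dots> = f c"
    using finite_supp[OF f] by (simp add: sum.delta' supp_def)
  finally show "(\<one>\<^bsub>ZA\<^esub> \<otimes>\<^bsub>ZA\<^esub> f) c = f c" .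
qed

lemma ZA_add_closed:
  assumes f: "f \<in> carrier ZA" and g: "g \<in> carrier ZA"
  shows "(\<lambda>x. f x + g x) \<in> carrier ZA"
proof -
  have "supp (\<lambda>x. f x + g x) \<subseteq> supp f \<union> supp g" by (auto simp: supp_def)
  thus ?thesis using f g finite_supp[OF f] finite_supp[OF g]
    by (auto simp: ZA_carrier intro: finite_subset)
qed

lemma ZA_distrib:
  assumes f: "f \<in> carrier ZA" and g: "g \<in> carrier ZA" and h: "h \<in> carrier ZA"
  shows "(f \<oplus>\<^bsub>ZA\<^esub> g) \<otimes>\<^bsub>ZA\<^esub> h = f \<otimes>\<^bsub>ZA\<^esub> h \<oplus>\<^bsub>ZA\<^esub> g \<otimes>\<^bsub>ZA\<^esub> h"
proof
  fix c
  let ?F = "supp f \<union> supp g"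
  have fin: "finite ?F" using finite_supp[OF f] finite_supp[OF g] by simp
  have "supp (f \<oplus>\<^bsub>ZA\<^esub> g) \<subseteq> ?F" by (auto simp: supp_def)
  hence "((f \<oplus>\<^bsub>ZA\<^esub> g) \<otimes>\<^bsub>ZA\<^esub> h) c
      = (\<Sum>x\<in>?F. \<Sum>y\<in>supp h. if m x y = c then (f x + g x) * h y else 0)"
    using ZA_mult_expand[OF fin _ finite_supp[OF h] subset_refl] by simp
  also have "\<dots> = (\<Sum>x\<in>?F. \<Sum>y\<in>supp h. if m x y = c then f x * h y else 0)
      + (\<Sum>x\<in>?F. \<Sum>y\<in>supp h. if m x y = c then g x * h y else 0)"
    by (simp add: sum.distrib[symmetric] distrib_right if_distrib cong: if_cong)
  also have "\<dots> = (f \<otimes>\<^bsub>ZA\<^esub> h) c + (g \<otimes>\<^bsub>ZA\<^esub> h) c"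
    using ZA_mult_expand[OF fin _ finite_supp[OF h] subset_refl] by simp
  finally show "((f \<oplus>\<^bsub>ZA\<^esub> g) \<otimes>\<^bsub>ZA\<^esub> h) c = (f \<otimes>\<^bsub>ZA\<^esub> h \<oplus>\<^bsub>ZA\<^esub> g \<otimes>\<^bsub>ZA\<^esub> h) c"
    by simp
qed

theorem ZA_cring: "cring ZA"
proof (rule cringI)
  show "abelian_group ZA"
  proof (rule abelian_groupI)
    show "\<And>x y. x \<in> carrier ZA \<Longrightarrow> y \<in> carrier ZA \<Longrightarrow> x \<oplus>\<^bsub>ZA\<^esub> y \<in> carrier ZA"
      by (simp add: ZA_add_closed)
    fix x assume x: "x \<in> carrier ZA"
    have "(\<lambda>a. - x a) \<in> carrier ZA" using x by (simp add: ZA_carrier supp_def)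
    thus "\<exists>y\<in>carrier ZA. y \<oplus>\<^bsub>ZA\<^esub> x = \<zero>\<^bsub>ZA\<^esub>" by force
  qed (auto simp: ZA_carrier supp_def)
  show "comm_monoid ZA"
    by (rule comm_monoidI) (erule (1) ZA_mult_closed, rule ZA_one_closed,
        erule (2) ZA_mult_assoc, erule ZA_one_mult, erule (1) ZA_mult_comm)
qed (rule ZA_distrib)

lemma ZA_a_inv:
  assumes f: "f \<in> carrier ZA"
  shows "\<ominus>\<^bsub>ZA\<^esub> f = (\<lambda>x. - f x)"
proof -
  interpret cring ZA by (rule ZA_cring)
  have "(\<lambda>x. - f x) \<in> carrier ZA" using f by (simp add: ZA_carrier supp_def)
  thus ?thesis by (intro minus_equality f) auto
qed

lemma basis_elt_closed: "a \<in> s_carrier S \<Longrightarrow> basis_elt a \<in> carrier ZA"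
proof -
  assume a: "a \<in> s_carrier S"
  have "supp (basis_elt a) \<subseteq> {a}" by (auto simp: supp_def basis_elt_def)
  thus ?thesis using a by (auto simp: ZA_carrier basis_elt_def intro: finite_subset)
qed

text \<open>Integer multiples of basis elements are multiples by constants of ZA, so they lie in
  every ideal containing the basis element.\<close>

lemma ZA_const_closed: "(\<lambda>x. if x = s_one S then k else 0) \<in> carrier ZA"
proof -
  have "supp (\<lambda>x. if x = s_one S then k else 0) \<subseteq> {s_one S}" by (auto simp: supp_def)
  thus ?thesis using one_in_carrier by (auto simp: ZA_carrier intro: finite_subset)
qed

lemma ZA_const_mult_basis:
  "b \<in> s_carrier S \<Longrightarrow>
    (\<lambda>x. if x = s_one S then k else 0) \<otimes>\<^bsub>ZA\<^esub> basis_elt b = (\<lambda>x. if x = b then k else 0)"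
  using ZA_monomial_mult[of S "s_one S" k b 1] by (simp add: basis_elt_def m_one cong: if_cong)

lemma formal_sum_in_ideal:
  assumes J: "ideal J ZA" and s: "\<forall>j<n. s j \<in> s_carrier S \<and> basis_elt (s j) \<in> J"
  shows "formal_sum n k s \<in> J"
  using s
proof (induction n)
  case 0
  show ?case using additive_subgroup.zero_closed[OF ideal.axioms(1)[OF J]]
    by (simp add: formal_sum_0)
next
  case (Suc n)
  have "formal_sum (Suc n) k s = formal_sum n k s \<oplus>\<^bsub>ZA\<^esub>
      ((\<lambda>x. if x = s_one S then k n else 0) \<otimes>\<^bsub>ZA\<^esub> basis_elt (s n))"
    using Suc.prems by (simp add: formal_sum_Suc ZA_const_mult_basis)
  also have "\<dots> \<in> J"
    using Suc by (intro additive_subgroup.a_closed[OF ideal.axioms(1)[OF J]]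
        ideal.I_l_closed[OF J] ZA_const_closed) auto
  finally show ?case .
qed

lemma ZA_idealI:
  assumes sub: "J \<subseteq> carrier ZA" and zero: "(\<lambda>x. 0) \<in> J"
    and add: "\<And>f g. f \<in> J \<Longrightarrow> g \<in> J \<Longrightarrow> (\<lambda>x. f x + g x) \<in> J"
    and neg: "\<And>f. f \<in> J \<Longrightarrow> (\<lambda>x. - f x) \<in> J"
    and mult: "\<And>f g. f \<in> carrier ZA \<Longrightarrow> g \<in> J \<Longrightarrow> f \<otimes>\<^bsub>ZA\<^esub> g \<in> J"
  shows "ideal J ZA"
proof -
  interpret cring ZA by (rule ZA_cring)
  show ?thesis
  proof (rule idealI)
    show "subgroup J (add_monoid ZA)"
      using sub zero add neg subsetD[OF sub] by (intro add.subgroupI) (auto simp: ZA_a_inv)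
  next
    fix a x assume "a \<in> J" "x \<in> carrier ZA"
    thus "x \<otimes>\<^bsub>ZA\<^esub> a \<in> J" "a \<otimes>\<^bsub>ZA\<^esub> x \<in> J"
      using mult subsetD[OF sub] ZA_mult_comm by metis+
  qed (rule ring_axioms)
qed

lemma evaluate_kernel_ideal:
  assumes w_mult: "\<And>x y. x \<in> s_carrier S \<Longrightarrow> y \<in> s_carrier S \<Longrightarrow> w (m x y) = w x * w y"
  shows "ideal {f \<in> carrier ZA. evaluate w f = 0} ZA"
proof (rule ZA_idealI)
  show "(\<lambda>x. 0) \<in> {f \<in> carrier ZA. evaluate w f = 0}"
    by (simp add: ZA_carrier evaluate_def supp_def)
  fix f assume f: "f \<in> {f \<in> carrier ZA. evaluate w f = 0}"
  have "evaluate w (\<lambda>x. - f x) = - evaluate w f" by (simp add: evaluate_def supp_def sum_negf)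
  thus "(\<lambda>x. - f x) \<in> {f \<in> carrier ZA. evaluate w f = 0}"
    using f by (simp add: ZA_carrier supp_def)
  fix g assume g: "g \<in> {f \<in> carrier ZA. evaluate w f = 0}"
  show "(\<lambda>x. f x + g x) \<in> {f \<in> carrier ZA. evaluate w f = 0}"
    using f g evaluate_add[OF finite_supp[of f S] finite_supp[of g S], of w]
    by (simp add: ZA_add_closed)
next
  fix f g assume "f \<in> carrier ZA" "g \<in> {f \<in> carrier ZA. evaluate w f = 0}"
  thus "f \<otimes>\<^bsub>ZA\<^esub> g \<in> {f \<in> carrier ZA. evaluate w f = 0}"
    by (simp add: ZA_mult_closed evaluate_mult w_mult)
qed auto

lemma ideal_trace_mult_closed:
  assumes J: "ideal J ZA" and x: "x \<in> ideal_trace S J" and y: "y \<in> s_carrier S"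
  shows "m x y \<in> ideal_trace S J"
proof -
  have "basis_elt x \<otimes>\<^bsub>ZA\<^esub> basis_elt y \<in> J"
    using x y by (auto simp: ideal_trace_def intro: ideal.I_r_closed[OF J] basis_elt_closed)
  thus ?thesis using x y by (auto simp: ideal_trace_def basis_elt_mult m_closed)
qed

lemma supported_on_ideal:
  assumes sub: "\<aa> \<subseteq> s_carrier S" and mult: "\<forall>x\<in>\<aa>. \<forall>y\<in>s_carrier S. m x y \<in> \<aa>"
  shows "ideal (supported_on S \<aa>) ZA"
proof (rule ZA_idealI)
  show "\<And>f g. f \<in> supported_on S \<aa> \<Longrightarrow> g \<in> supported_on S \<aa> \<Longrightarrow>
      (\<lambda>x. f x + g x) \<in> supported_on S \<aa>"
    by (simp add: supported_on_def ZA_add_closed)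
next
  fix f g assume f: "f \<in> carrier ZA" and g: "g \<in> supported_on S \<aa>"
  hence g_carrier: "g \<in> carrier ZA" and supp_g: "supp g \<subseteq> \<aa>"
    by (auto simp: supported_on_def supp_def)
  have "(f \<otimes>\<^bsub>ZA\<^esub> g) c = 0" if c: "c \<notin> \<aa>" for c
  proof (rule ccontr)
    assume "(f \<otimes>\<^bsub>ZA\<^esub> g) c \<noteq> 0"
    hence "c \<in> (\<lambda>(u, v). m u v) ` (supp f \<times> supp g)"
      using ZA_mult_supp[OF finite_supp[OF f] finite_supp[OF g_carrier]] by (auto simp: supp_def)
    then obtain u v where "u \<in> supp f" "v \<in> supp g" "c = m u v" by auto
    moreover have "u \<in> s_carrier S" "v \<in> \<aa>"
      using \<open>u \<in> supp f\<close> \<open>v \<in> supp g\<close> supp_subset[OF f] supp_g by auto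
    ultimately show False using c mult sub m_comm by (metis subsetD)
  qed
  thus "f \<otimes>\<^bsub>ZA\<^esub> g \<in> supported_on S \<aa>"
    using ZA_mult_closed[OF f g_carrier] by (simp add: supported_on_def)
qed (auto simp: supported_on_def ZA_carrier supp_def)

end

section \<open>The relation ideal I(A)\<close>

text \<open>A sum over a finite subset of B can be written as an indexed sum of at least two
  terms from B, padding with zero coefficients; this is how an arbitrary element of ZA
  supported on B is matched with a (partially defined) sum in the sesquiad.\<close>

lemma finite_sum_as_indexed_sum:
  fixes w :: "'a \<Rightarrow> 'r::comm_ring_1"
  assumes fin: "finite F" and F: "F \<subseteq> B" and b0: "b0 \<in> B"
  obtains n k s where "2 \<le> (n::nat)" "\<forall>j<n. s j \<in> B"
    "(\<Sum>j<n. of_int (k j) * w (s j)) = (\<Sum>x\<in>F. of_int (l x) * w x)"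
proof -
  obtain h where h: "bij_betw h {0..<card F} F" using ex_bij_betw_nat_finite[OF fin] by blast
  define s where "s j = (if j < card F then h j else b0)" for j
  define k where "k j = (if j < card F then l (h j) else 0)" for j
  have "\<forall>j<card F + 2. s j \<in> B"
    using h F b0 by (auto simp: s_def bij_betw_def)
  moreover have "(\<Sum>j<card F + 2. of_int (k j) * w (s j)) = (\<Sum>j\<in>{0..<card F}. of_int (k j) * w (s j))"
    by (rule sum.mono_neutral_right) (auto simp: k_def)
  moreover have "\<dots> = (\<Sum>x\<in>F. of_int (l x) * w x)"
    using sum.reindex_bij_betw[OF h, of "\<lambda>x. of_int (l x) * w x"] by (simp add: k_def s_def)
  ultimately show ?thesis by (intro that[where n = "card F + 2" and k = k and s = s]) auto
qed

context
  fixes S :: "'a sesquiad" and \<phi> :: "'a \<Rightarrow> 'r::comm_ring_1"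
  assumes via: "sesquiad_via S \<phi>"
begin

lemma monoid: "comm_monoid_zero S"
  and \<phi>_inj: "inj_on \<phi> (s_carrier S)"
  and \<phi>_mult: "\<And>x y. x \<in> s_carrier S \<Longrightarrow> y \<in> s_carrier S \<Longrightarrow> \<phi> (s_mult S x y) = \<phi> x * \<phi> y"
  using via by (auto simp: sesquiad_via_def)

lemma s_sum_cases:
  assumes "2 \<le> n" "\<forall>j<n. a j \<in> s_carrier S"
  shows "case s_sum S n k a of
           None \<Rightarrow> (\<Sum>j<n. of_int (k j) * \<phi> (a j)) \<notin> \<phi> ` s_carrier S
         | Some b \<Rightarrow> b \<in> s_carrier S \<and> \<phi> b = (\<Sum>j<n. of_int (k j) * \<phi> (a j))"
  using via assms unfolding sesquiad_via_def by blast

lemma sum_relations_closed: "sum_relations S \<subseteq> carrier (monoid_ring S)"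
proof
  fix g assume "g \<in> sum_relations S"
  then obtain n k a b where g: "g = (\<lambda>x. formal_sum n k a x - basis_elt b x)"
    and n: "2 \<le> n" and a: "\<forall>j<n. a j \<in> s_carrier S" and b: "s_sum S n k a = Some b"
    unfolding sum_relations_def formal_sum_def by blast
  have "b \<in> s_carrier S" using s_sum_cases[OF n a, of k] b by simp
  hence "supp g \<subseteq> a ` {..<n} \<union> {b}" "a ` {..<n} \<union> {b} \<subseteq> s_carrier S"
    using supp_formal_sum[of n k a] a by (auto simp: g supp_def basis_elt_def)
  thus "g \<in> carrier (monoid_ring S)"
    unfolding ZA_carrier supp_def by (auto intro: finite_subset)
qed

lemma rel_ideal_ideal: "ideal (rel_ideal S) (monoid_ring S)"
  unfolding rel_ideal_def
  by (rule ring.genideal_ideal[OF cring.axioms(1)[OF ZA_cring[OF monoid]] sum_relations_closed])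

lemma sum_relations_in_rel_ideal: "sum_relations S \<subseteq> rel_ideal S"
  unfolding rel_ideal_def
  by (rule ring.genideal_self[OF cring.axioms(1)[OF ZA_cring[OF monoid]] sum_relations_closed])

text \<open>Evaluation along the embedding into the ring kills I(A), since it kills its
  generators and its kernel is an ideal.\<close>

lemma evaluate_rel_ideal:
  assumes r: "r \<in> rel_ideal S"
  shows "evaluate \<phi> r = 0"
proof -
  have "sum_relations S \<subseteq> {f \<in> carrier (monoid_ring S). evaluate \<phi> f = 0}"
  proof
    fix g assume g_rel: "g \<in> sum_relations S"
    then obtain n k a b where g: "g = (\<lambda>x. formal_sum n k a x - basis_elt b x)"
      and n: "2 \<le> n" and a: "\<forall>j<n. a j \<in> s_carrier S" and b: "s_sum S n k a = Some b"
      unfolding sum_relations_def formal_sum_def by blast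
    have "g = (\<lambda>x. formal_sum n k a x + (if x = b then - 1 else 0))"
      by (auto simp: g basis_elt_def)
    moreover have "finite (supp (formal_sum n k a))"
      by (rule finite_subset[OF supp_formal_sum]) simp
    moreover have "finite (supp (\<lambda>x. if x = b then - 1 else (0::int)))"
      by (rule finite_subset[of _ "{b}"]) (auto simp: supp_def)
    moreover have "\<phi> b = (\<Sum>j<n. of_int (k j) * \<phi> (a j))"
      using s_sum_cases[OF n a, of k] b by simp
    ultimately have "evaluate \<phi> g = 0"
      by (simp add: evaluate_add evaluate_monomial evaluate_formal_sum)
    thus "g \<in> {f \<in> carrier (monoid_ring S). evaluate \<phi> f = 0}"
      using g_rel sum_relations_closed by auto
  qed
  moreover have "ideal {f \<in> carrier (monoid_ring S). evaluate \<phi> f = 0} (monoid_ring S)"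
    by (rule evaluate_kernel_ideal[OF monoid \<phi>_mult])
  ultimately have "rel_ideal S \<subseteq> {f \<in> carrier (monoid_ring S). evaluate \<phi> f = 0}"
    unfolding rel_ideal_def
    by (intro ring.genideal_minimal[OF cring.axioms(1)[OF ZA_cring[OF monoid]]])
  thus ?thesis using r by auto
qed

section \<open>Traces of ideals containing I(A)\<close>

text \<open>Necessity of condition (i): the trace of an ideal containing I(A) is closed under
  the defined sums, because the formal sum and the basis element of its value differ by a
  generator of I(A).\<close>

lemma ideal_trace_closed_under_sums:
  assumes J: "ideal J (monoid_ring S)" and rel: "rel_ideal S \<subseteq> J"
  shows "closed_under_sums S (ideal_trace S J)"
  unfolding closed_under_sums_def
proof (intro allI impI)
  fix n k s b
  assume n: "2 \<le> n" and s: "\<forall>j<n. s j \<in> ideal_trace S J" and b: "s_sum S n k s = Some b"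
  have J_add: "additive_subgroup J (monoid_ring S)" by (rule ideal.axioms(1)[OF J])
  have s_carrier: "\<forall>j<n. s j \<in> s_carrier S" using s by (simp add: ideal_trace_def)
  have b_carrier: "b \<in> s_carrier S" using s_sum_cases[OF n s_carrier, of k] b by simp
  let ?g = "\<lambda>x. formal_sum n k s x - basis_elt b x"
  have "?g \<in> sum_relations S"
    using n s_carrier b unfolding sum_relations_def formal_sum_def by blast
  hence g: "?g \<in> J" using sum_relations_in_rel_ideal rel by blast
  have "formal_sum n k s \<oplus>\<^bsub>monoid_ring S\<^esub> (\<ominus>\<^bsub>monoid_ring S\<^esub> ?g) \<in> J"
    using formal_sum_in_ideal[OF monoid J] s g
    by (intro additive_subgroup.a_closed[OF J_add] additive_subgroup.a_inv_closed[OF J_add])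
      (auto simp: ideal_trace_def)
  moreover have "formal_sum n k s \<oplus>\<^bsub>monoid_ring S\<^esub> (\<ominus>\<^bsub>monoid_ring S\<^esub> ?g) = basis_elt b"
    using g additive_subgroup.a_subset[OF J_add] by (auto simp: ZA_a_inv[OF monoid])
  ultimately show "b \<in> ideal_trace S J" using b_carrier by (simp add: ideal_trace_def)
qed

text \<open>Sufficiency of condition (i): if the image of a is an integer combination of images of
  elements of a nonempty subset closed under sums, then a itself lies in the subset, since
  the corresponding sum is defined in A and its value is a by injectivity.\<close>

lemma mem_if_evaluate_supported:
  assumes closed: "closed_under_sums S \<aa>" and sub: "\<aa> \<subseteq> s_carrier S" and nonempty: "\<aa> \<noteq> {}"
    and a: "a \<in> s_carrier S" and l: "l \<in> supported_on S \<aa>" and eval: "\<phi> a = evaluate \<phi> l"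
  shows "a \<in> \<aa>"
proof -
  have supp_l: "supp l \<subseteq> \<aa>" using l by (auto simp: supported_on_def supp_def)
  have fin_l: "finite (supp l)" using l finite_supp by (auto simp: supported_on_def)
  obtain b0 where b0: "b0 \<in> \<aa>" using nonempty by blast
  obtain n :: nat and k s where n: "2 \<le> n" and s: "\<forall>j<n. s j \<in> \<aa>"
    and "(\<Sum>j<n. of_int (k j) * \<phi> (s j)) = (\<Sum>x\<in>supp l. of_int (l x) * \<phi> x)"
    by (rule finite_sum_as_indexed_sum[OF fin_l supp_l b0])
  hence sum_eq: "(\<Sum>j<n. of_int (k j) * \<phi> (s j)) = \<phi> a" using eval by (simp add: evaluate_def)
  have s_carrier: "\<forall>j<n. s j \<in> s_carrier S" using s sub by blast
  show ?thesis
  proof (cases "s_sum S n k s")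
    case None
    thus ?thesis using s_sum_cases[OF n s_carrier, of k] sum_eq a by simp
  next
    case (Some b)
    hence "b \<in> s_carrier S" "\<phi> b = \<phi> a" using s_sum_cases[OF n s_carrier, of k] sum_eq by auto
    hence "b = a" using \<phi>_inj a by (auto dest: inj_onD)
    moreover have "b \<in> \<aa>" using closed n s Some unfolding closed_under_sums_def by blast
    ultimately show ?thesis by simp
  qed
qed

lemma ideal_trace_supported_on_plus_rel:
  assumes closed: "closed_under_sums S \<aa>" and mult: "\<forall>x\<in>\<aa>. \<forall>y\<in>s_carrier S. s_mult S x y \<in> \<aa>"
    and sub: "\<aa> \<subseteq> s_carrier S" and nonempty: "\<aa> \<noteq> {}"
  shows "ideal_trace S (supported_on S \<aa> <+>\<^bsub>monoid_ring S\<^esub> rel_ideal S) = \<aa>"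
proof (intro equalityI subsetI)
  fix a assume "a \<in> ideal_trace S (supported_on S \<aa> <+>\<^bsub>monoid_ring S\<^esub> rel_ideal S)"
  then obtain l r where a: "a \<in> s_carrier S" and l: "l \<in> supported_on S \<aa>"
    and r: "r \<in> rel_ideal S" and a_eq: "basis_elt a = (\<lambda>x. l x + r x)"
    by (auto simp: ideal_trace_def set_add_def')
  have l_carrier: "l \<in> carrier (monoid_ring S)" using l by (simp add: supported_on_def)
  have r_carrier: "r \<in> carrier (monoid_ring S)"
    using r ideal.Icarr[OF rel_ideal_ideal] by blast
  have "\<phi> a = evaluate \<phi> (basis_elt a)"
    using evaluate_monomial[of \<phi> a 1] by (simp add: basis_elt_def)
  also have "\<dots> = evaluate \<phi> l + evaluate \<phi> r"
    unfolding a_eq by (rule evaluate_add[OF finite_supp[OF l_carrier] finite_supp[OF r_carrier]])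
  also have "\<dots> = evaluate \<phi> l" by (simp add: evaluate_rel_ideal[OF r])
  finally show "a \<in> \<aa>" by (rule mem_if_evaluate_supported[OF closed sub nonempty a l])
next
  fix a assume a: "a \<in> \<aa>"
  hence "basis_elt a \<in> supported_on S \<aa>"
    using sub basis_elt_closed[OF monoid] by (auto simp: supported_on_def basis_elt_def)
  moreover have "(\<lambda>x. 0) \<in> rel_ideal S"
    using additive_subgroup.zero_closed[OF ideal.axioms(1)[OF rel_ideal_ideal]] by simp
  ultimately have "basis_elt a \<oplus>\<^bsub>monoid_ring S\<^esub> (\<lambda>x. 0)
      \<in> supported_on S \<aa> <+>\<^bsub>monoid_ring S\<^esub> rel_ideal S"
    unfolding set_add_def' by blast
  thus "a \<in> ideal_trace S (supported_on S \<aa> <+>\<^bsub>monoid_ring S\<^esub> rel_ideal S)"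
    using a sub by (auto simp: ideal_trace_def)
qed

end

section \<open>Ideals of a quotient ring and their traces\<close>

text \<open>By the correspondence between ideals of R/K and ideals of R containing K, the subsets
  of X cut out by ideals of R/K through the images of a map e are exactly those cut out by
  ideals of R containing K.\<close>

lemma (in ring) quotient_ideal_traces:
  assumes K: "ideal K R" and e: "e ` X \<subseteq> carrier R"
  shows "(\<exists>I. ideal I (R Quot K) \<and> T = {x \<in> X. K +> e x \<in> I})
     \<longleftrightarrow> (\<exists>J. ideal J R \<and> K \<subseteq> J \<and> T = {x \<in> X. e x \<in> J})"
proof
  assume "\<exists>I. ideal I (R Quot K) \<and> T = {x \<in> X. K +> e x \<in> I}"
  then obtain I where I: "ideal I (R Quot K)" and T: "T = {x \<in> X. K +> e x \<in> I}" by blast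
  have I_sub: "I \<subseteq> carrier (R Quot K)" using I by (simp add: ideal_def additive_subgroup.a_subset)
  have "K \<in> I"
    using additive_subgroup.zero_closed[OF ideal.axioms(1)[OF I]] by (simp add: FactRing_def)
  hence "K \<subseteq> \<Union> I" by blast
  moreover have "T = {x \<in> X. e x \<in> \<Union> I}"
    using canonical_proj_vimage_mem_iff[OF K I_sub] e by (auto simp: T)
  ultimately show "\<exists>J. ideal J R \<and> K \<subseteq> J \<and> T = {x \<in> X. e x \<in> J}"
    using quot_ideal_imp_ring_ideal[OF K I] by blast
next
  assume "\<exists>J. ideal J R \<and> K \<subseteq> J \<and> T = {x \<in> X. e x \<in> J}"
  then obtain J where J: "ideal J R" and KJ: "K \<subseteq> J" and T: "T = {x \<in> X. e x \<in> J}" by blast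
  let ?I = "(+>) K ` J"
  have I: "ideal ?I (R Quot K)" by (rule ring_ideal_imp_quot_ideal[OF K J])
  have I_sub: "?I \<subseteq> carrier (R Quot K)" using I by (simp add: ideal_def additive_subgroup.a_subset)
  have "\<Union> ?I = J" using ideal_incl_iff[OF K J] KJ by simp
  hence "T = {x \<in> X. K +> e x \<in> ?I}"
    using canonical_proj_vimage_mem_iff[OF K I_sub] e by (auto simp: T)
  thus "\<exists>I. ideal I (R Quot K) \<and> T = {x \<in> X. K +> e x \<in> I}" using I by blast
qed

theorem mainTheorem4:
  fixes S :: "'a sesquiad" and \<phi> :: "'a \<Rightarrow> 'r::comm_ring_1" and \<aa> :: "'a set"
  assumes "sesquiad_via S \<phi>"
    and "\<aa> \<subseteq> s_carrier S"
    and "\<aa> \<noteq> {}"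
  shows "(\<exists>I. ideal I (universal_ring S) \<and> \<aa> = {a \<in> s_carrier S. univ_map S a \<in> I})
     \<longleftrightarrow> (closed_under_sums S \<aa> \<and>
          (\<forall>x\<in>\<aa>. \<forall>y\<in>s_carrier S. s_mult S x y \<in> \<aa>))"
proof -
  note via = assms(1)
  interpret ZA: cring "monoid_ring S" by (rule ZA_cring[OF monoid[OF via]])
  have "(\<exists>I. ideal I (universal_ring S) \<and> \<aa> = {a \<in> s_carrier S. univ_map S a \<in> I})
      \<longleftrightarrow> (\<exists>J. ideal J (monoid_ring S) \<and> rel_ideal S \<subseteq> J \<and> \<aa> = ideal_trace S J)"
    unfolding universal_ring_def univ_map_def ideal_trace_def
    using basis_elt_closed[OF monoid[OF via]]
    by (intro ZA.quotient_ideal_traces[OF rel_ideal_ideal[OF via]]) blast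
  also have "\<dots> \<longleftrightarrow> closed_under_sums S \<aa> \<and> (\<forall>x\<in>\<aa>. \<forall>y\<in>s_carrier S. s_mult S x y \<in> \<aa>)"
  proof
    assume "\<exists>J. ideal J (monoid_ring S) \<and> rel_ideal S \<subseteq> J \<and> \<aa> = ideal_trace S J"
    thus "closed_under_sums S \<aa> \<and> (\<forall>x\<in>\<aa>. \<forall>y\<in>s_carrier S. s_mult S x y \<in> \<aa>)"
      using ideal_trace_closed_under_sums[OF via] ideal_trace_mult_closed[OF monoid[OF via]] by blast
  next
    assume "closed_under_sums S \<aa> \<and> (\<forall>x\<in>\<aa>. \<forall>y\<in>s_carrier S. s_mult S x y \<in> \<aa>)"
    hence "ideal_trace S (supported_on S \<aa> <+>\<^bsub>monoid_ring S\<^esub> rel_ideal S) = \<aa>"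
      and "ideal (supported_on S \<aa> <+>\<^bsub>monoid_ring S\<^esub> rel_ideal S) (monoid_ring S)"
      using ideal_trace_supported_on_plus_rel[OF via] assms(2,3)
        ZA.add_ideals[OF supported_on_ideal[OF monoid[OF via] assms(2)] rel_ideal_ideal[OF via]]
      by auto
    moreover have "rel_ideal S \<subseteq> supported_on S \<aa> <+>\<^bsub>monoid_ring S\<^esub> rel_ideal S"
      using ZA.zero_closed by (force simp: set_add_def' supported_on_def)
    ultimately show "\<exists>J. ideal J (monoid_ring S) \<and> rel_ideal S \<subseteq> J \<and> \<aa> = ideal_trace S J"
      by metis
  qed
  finally show ?thesis .
qed

end
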